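(* Fix $T>0$ and assume (a)–(b) below. On the event $\Omega^T=\{Z(T)>0\}$, the simple Sevast'yanov process of the genealogy coincides with the reduced Sevast'yanov process of the underlying (symmetric or asymmetric) branching tree: $(Z\circ\mathcal G)(t)=Z^T(t)$ for all $t\ge0$.
   Context: Ulam–Harris labels $U=\bigcup_{n\ge0}\mathbb N^n$, $\mathbb N^0=\{0\}$ (root $0$, omitted in concatenations $xk$); mother $\mathfrak m x$, rank $\mathfrak r x$ (last letter); $x\preceq y$ iff $x=\mathfrak m^ky$ for some $k\ge0$. Neveu trees: $u\subseteq U$ containing $0$, closed under $\mathfrak m$, children of $x$ labelled $x1,\dots,xn_x$. Branching trees $\Omega=[0,\infty)^2\times\bigcup_u(\{u\}\times(0,\infty)^u)$ with coordinates birth time $\tau$, age $\alpha$, Neveu tree $\gamma$, lengths $L_x$. $\tau_0=\tau$, $\tau_x=\tau_{\mathfrak m x}+L_{\mathfrak m x}$; ages either asymmetric ($\alpha_0=\alpha$, $\alpha_x=\alpha_{\mathfrak m x}+L_{\mathfrak m x}$ if $\mathfrak r x=1$, else $0$) or symmetric (all $0$). Subtree $\mathcal T_x=(\tau_x,\alpha_x,\{y:xy\in\gamma\},(L_{xy}))$. $Z(t)=\sum_{x\in\gamma}\mathbf 1_{(0,L_x]}(t-\tau_x)$ (for any branching tree), $Z_x=Z\circ\mathcal T_x$, $Z^T(t)=\sum_{x\in\gamma}\mathbf 1_{(0,L_x]}(t-\tau_x)\mathbf 1(Z_x(T)>0)$. Law $\mathbb P_{\tau,\alpha}$: root length $L\sim\mu_{\tau,\alpha}$,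 root offspring number $N\mid L\sim\nu_{\tau,\alpha,L}$, first-generation subtrees conditionally independent with laws $\mathbb P_{\tau_k,\alpha_k}$; standing assumptions (a) $\mu_{\tau,\alpha}\ll\xi$ with density $\le C$ for a locally finite $\xi$, (b) offspring means $\le M$ uniformly (so $Z(T)<\infty$ a.s.). Genealogy at time $T$: extant branches $\zeta^T=\{x\in\gamma:\tau_x<T\le\tau_x+L_x\}$; on $\Omega^T$, $\lambda^T$ is the $\preceq$-maximal branch $y$ with $y\preceq x$ for all $x\in\zeta^T$ (least common ancestor). Root length $L^T=\tau_{\lambda^T}+L_{\lambda^T}-\tau$ if $\lambda^T\notin\zeta^T$ and $L^T=T-\tau$ if $\lambda^T\in\zeta^T$; $\Lambda^T=\{\lambda^Tk\in\gamma: Z_{\lambda^Tk}(T)>0\}$, $N^T=|\Lambda^T|$. The genealogy $\mathcal G$ is the branching tree defined recursively: its root has birth time $\tau$, age $\alpha$, length $L^T$ and $N^T$ children, and the subtree rooted at its $k$-th child is $\mathcal G\circ\mathcal T_x$ where $x$ is the element of $\Lambda^T$ with the $k$-th smallest rank; if $Z(T)=1$ then $\mathcal G=(\tau,\alpha,\{0\},T-\tau)$.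
   Formalization: The identity $(Z\circ\mathcal G)(t)=Z^T(t)$ is asserted for $0\le t\le T$ only, in place of all $t\ge0$. The statement above fails without it. *)

theory Defs
  imports Complex_Main "HOL-Library.Sublist"
begin

text \<open>Ulam--Harris labels are lists of positive naturals; the root 0 is the empty list,
  the label x k is x @ [k], the mother is butlast, the rank is last, and
  x \<preceq> y (x is an ancestor of y) is prefix x y.\<close>

definition neveu :: "nat list set \<Rightarrow> bool" where
  "neveu u \<longleftrightarrow> [] \<in> u \<and> (\<forall>x\<in>u. \<forall>k\<in>set x. 1 \<le> k)
     \<and> (\<forall>x\<in>u. x \<noteq> [] \<longrightarrow> butlast x \<in> u)
     \<and> (\<forall>x. \<exists>n::nat. \<forall>k. x @ [k] \<in> u \<longleftrightarrow> (x \<in> u \<and> 1 \<le> k \<and> k \<le> n))"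

text \<open>Branching tree: birth time, age, Neveu tree, lengths (extended by 0 outside the tree).\<close>
record btree =
  bt_tau :: real
  bt_alpha :: real
  bt_gam :: "nat list set"
  bt_len :: "nat list \<Rightarrow> real"

definition is_btree :: "btree \<Rightarrow> bool" where
  "is_btree w \<longleftrightarrow> bt_tau w \<ge> 0 \<and> bt_alpha w \<ge> 0 \<and> neveu (bt_gam w)
     \<and> (\<forall>x\<in>bt_gam w. bt_len w x > 0) \<and> (\<forall>x. x \<notin> bt_gam w \<longrightarrow> bt_len w x = 0)"

definition birth :: "btree \<Rightarrow> nat list \<Rightarrow> real" where
  "birth w x = bt_tau w + (\<Sum>i<length x. bt_len w (take i x))"

text \<open>Ages; the flag symm selects the symmetric (True) or asymmetric (False) convention.
  age_pref symm w x n is the age of the ancestor take n x.\<close>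
fun age_pref :: "bool \<Rightarrow> btree \<Rightarrow> nat list \<Rightarrow> nat \<Rightarrow> real" where
  "age_pref symm w x 0 = bt_alpha w"
| "age_pref symm w x (Suc n) =
     (if symm then 0
      else if x ! n = 1 then age_pref symm w x n + bt_len w (take n x) else 0)"

definition age :: "bool \<Rightarrow> btree \<Rightarrow> nat list \<Rightarrow> real" where
  "age symm w x = age_pref symm w x (length x)"

definition subtree :: "bool \<Rightarrow> btree \<Rightarrow> nat list \<Rightarrow> btree" where
  "subtree symm w x = \<lparr> bt_tau = birth w x, bt_alpha = age symm w x,
      bt_gam = {y. x @ y \<in> bt_gam w}, bt_len = (\<lambda>y. bt_len w (x @ y)) \<rparr>"

definition alive :: "btree \<Rightarrow> real \<Rightarrow> nat list \<Rightarrow> bool" where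
  "alive w t x \<longleftrightarrow> 0 < t - birth w x \<and> t - birth w x \<le> bt_len w x"

definition Z :: "btree \<Rightarrow> real \<Rightarrow> nat" where
  "Z w t = card {x \<in> bt_gam w. alive w t x}"

definition ZT :: "bool \<Rightarrow> real \<Rightarrow> btree \<Rightarrow> real \<Rightarrow> nat" where
  "ZT symm T w t = card {x \<in> bt_gam w. alive w t x \<and> Z (subtree symm w x) T > 0}"

definition extant :: "btree \<Rightarrow> real \<Rightarrow> nat list set" where
  "extant w T = {x \<in> bt_gam w. birth w x < T \<and> T \<le> birth w x + bt_len w x}"

definition lca :: "real \<Rightarrow> btree \<Rightarrow> nat list" where
  "lca T w = (THE y. y \<in> bt_gam w \<and> (\<forall>x\<in>extant w T. prefix y x)
      \<and> (\<forall>z. z \<in> bt_gam w \<and> (\<forall>x\<in>extant w T. prefix z x) \<longrightarrow> prefix z y))"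

definition LT :: "real \<Rightarrow> btree \<Rightarrow> real" where
  "LT T w = (if lca T w \<notin> extant w T
             then birth w (lca T w) + bt_len w (lca T w) - bt_tau w
             else T - bt_tau w)"

definition Lranks :: "bool \<Rightarrow> real \<Rightarrow> btree \<Rightarrow> nat set" where
  "Lranks symm T w = {k. lca T w @ [k] \<in> bt_gam w \<and> Z (subtree symm w (lca T w @ [k])) T > 0}"

definition NT :: "bool \<Rightarrow> real \<Rightarrow> btree \<Rightarrow> nat" where
  "NT symm T w = card (Lranks symm T w)"

definition kth_child :: "bool \<Rightarrow> real \<Rightarrow> btree \<Rightarrow> nat \<Rightarrow> nat list" where
  "kth_child symm T w k = lca T w @ [sorted_list_of_set (Lranks symm T w) ! (k - 1)]"

text \<open>gsub symm T w y: the branching tree whose genealogy is the subtree of the genealogy of w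
  rooted at the genealogy label y (None if y is not a label of the genealogy).
  Follows the recursion: the k-th child subtree of the genealogy of w is the genealogy of
  T_x w, x the element of Lambda^T of k-th smallest rank; if Z(T) = 1 there are no children.\<close>
fun gsub :: "bool \<Rightarrow> real \<Rightarrow> btree \<Rightarrow> nat list \<Rightarrow> btree option" where
  "gsub symm T w [] = Some w"
| "gsub symm T w (k # ks) =
     (if Z w T \<noteq> 1 \<and> 1 \<le> k \<and> k \<le> NT symm T w
      then gsub symm T (subtree symm w (kth_child symm T w k)) ks else None)"

text \<open>The genealogy G (root length T - tau in the case Z(T) = 1, which is what LT gives there).\<close>
definition genealogy :: "bool \<Rightarrow> real \<Rightarrow> btree \<Rightarrow> btree" where
  "genealogy symm T w = \<lparr> bt_tau = bt_tau w, bt_alpha = bt_alpha w,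
      bt_gam = {y. gsub symm T w y \<noteq> None},
      bt_len = (\<lambda>y. case gsub symm T w y of Some v \<Rightarrow>
                        (if Z v T = 1 then T - bt_tau v else LT T v) | None \<Rightarrow> 0) \<rparr>"

end

theory Submission
  imports Defs
begin

text \<open>The genealogy is built recursively: its root lives from \<open>\<tau>\<close> until the death of the
  last common ancestor \<open>\<lambda>\<^sup>T\<close> of the branches extant at \<open>T\<close>, and its children are the
  genealogies of the subtrees rooted at those children of \<open>\<lambda>\<^sup>T\<close> that have extant descendants.
  Correspondingly, a branch counted by \<open>Z\<^sup>T(t)\<close>, i.e. alive at \<open>t \<le> T\<close> and with a descendant
  extant at \<open>T\<close>, is either an ancestor of \<open>\<lambda>\<^sup>T\<close> (and the lifetimes of these ancestors tile the
  interval from \<open>\<tau>\<close> to the death of \<open>\<lambda>\<^sup>T\<close>, so at most one of them is alive) or lies in one of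
  those subtrees. Since \<open>Z(T)\<close> strictly decreases on passing to such a subtree, strong induction
  on \<open>Z(T)\<close> matches the two counts.\<close>

definition prefix_closed :: "'a list set \<Rightarrow> bool" where
  "prefix_closed A \<longleftrightarrow> (\<forall>x\<in>A. \<forall>p. prefix p x \<longrightarrow> p \<in> A)"

text \<open>The part of the hypotheses that the argument uses; unlike \<^const>\<open>is_btree\<close> it is
  inherited by all subtrees.\<close>

definition admissible :: "real \<Rightarrow> btree \<Rightarrow> bool" where
  "admissible T w \<longleftrightarrow> prefix_closed (bt_gam w) \<and> (\<forall>x. 0 \<le> bt_len w x) \<and> finite (extant w T)"

lemma prefix_closed_if_butlast_closed:
  assumes "\<forall>x\<in>A. x \<noteq> [] \<longrightarrow> butlast x \<in> A"
  shows "prefix_closed A"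
proof -
  have "p \<in> A" if "x \<in> A" "prefix p x" for x p :: "'a list"
    using that
  proof (induction x arbitrary: p rule: rev_induct)
    case (snoc a x)
    then have "x \<in> A" using assms by force
    with snoc show ?case by auto
  qed simp
  then show ?thesis by (auto simp: prefix_closed_def)
qed

lemma admissible_if_is_btree:
  assumes "is_btree w" and "finite (extant w T)"
  shows "admissible T w"
proof -
  have "neveu (bt_gam w)" and "\<forall>x. 0 \<le> bt_len w x"
    using assms(1) unfolding is_btree_def by (auto intro: less_imp_le)
  then show ?thesis
    using assms(2) by (auto simp: admissible_def neveu_def intro: prefix_closed_if_butlast_closed)
qed

lemma birth_Nil [simp]: "birth w [] = bt_tau w"
  by (simp add: birth_def)

lemma birth_snoc: "birth w (x @ [k]) = birth w x + bt_len w x"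
  by (simp add: birth_def sum.lessThan_Suc)

lemma subtree_simps [simp]:
  "bt_tau (subtree s w x) = birth w x"
  "bt_gam (subtree s w x) = {y. x @ y \<in> bt_gam w}"
  "bt_len (subtree s w x) = (\<lambda>y. bt_len w (x @ y))"
  by (simp_all add: subtree_def)

lemma birth_subtree [simp]: "birth (subtree s w x) y = birth w (x @ y)"
  by (induction y rule: rev_induct) (simp_all add: birth_snoc flip: append_assoc)

lemma alive_subtree [simp]: "alive (subtree s w x) t y \<longleftrightarrow> alive w t (x @ y)"
  by (simp add: alive_def)

lemma birth_mono:
  assumes "\<forall>x. 0 \<le> bt_len w x" and "prefix p q"
  shows "birth w p \<le> birth w q"
proof -
  obtain r where "q = p @ r" using assms(2) by (auto simp: prefix_def)
  moreover have "birth w p \<le> birth w (p @ r)"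
    using assms(1) by (induction r rule: rev_induct)
      (auto simp: birth_snoc intro: add_increasing2 simp flip: append_assoc)
  ultimately show ?thesis by simp
qed

lemma birth_strict_prefix:
  assumes "\<forall>x. 0 \<le> bt_len w x" and "strict_prefix p q"
  shows "birth w p + bt_len w p \<le> birth w q"
proof -
  obtain k r where "q = (p @ [k]) @ r" using assms(2) by (auto elim: strict_prefixE')
  then show ?thesis using birth_mono[OF assms(1), of "p @ [k]" q] by (simp add: birth_snoc)
qed

lemma alive_prefix_eq:
  assumes "\<forall>x. 0 \<le> bt_len w x" "alive w t x" "alive w t y" "prefix x y"
  shows "x = y"
proof (rule ccontr)
  assume "x \<noteq> y"
  with assms(4) have "birth w x + bt_len w x \<le> birth w y"
    by (intro birth_strict_prefix[OF assms(1)]) (simp add: strict_prefix_def)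
  with assms(2,3) show False by (simp add: alive_def)
qed

lemma alive_prefix_bounds:
  assumes "\<forall>x. 0 \<le> bt_len w x" "alive w t x" "prefix x l"
  shows "bt_tau w < t \<and> t \<le> birth w l + bt_len w l"
proof -
  have "bt_tau w \<le> birth w x" using birth_mono[OF assms(1), of "[]" x] by simp
  moreover have "birth w x + bt_len w x \<le> birth w l + bt_len w l"
  proof (cases "x = l")
    case False
    with assms(3) have "birth w x + bt_len w x \<le> birth w l"
      by (intro birth_strict_prefix[OF assms(1)]) (simp add: strict_prefix_def)
    moreover have "0 \<le> bt_len w l" using assms(1) by blast
    ultimately show ?thesis by linarith
  qed simp
  ultimately show ?thesis using assms(2) by (auto simp: alive_def)
qed

lemma ex_alive_prefix:
  assumes "bt_tau w < t" "t \<le> birth w l + bt_len w l"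
  shows "\<exists>x. prefix x l \<and> alive w t x"
  using assms(2)
proof (induction l rule: rev_induct)
  case Nil
  with assms(1) show ?case by (auto simp: alive_def)
next
  case (snoc k l)
  show ?case
  proof (cases "t \<le> birth w l + bt_len w l")
    case True
    with snoc.IH show ?thesis by auto
  next
    case False
    with snoc.prems have "alive w t (l @ [k])" by (simp add: alive_def birth_snoc)
    then show ?thesis by blast
  qed
qed

lemma card_alive_prefixes:
  assumes "\<forall>x. 0 \<le> bt_len w x"
  shows "card {x. prefix x l \<and> alive w t x}
    = (if bt_tau w < t \<and> t \<le> birth w l + bt_len w l then 1 else 0)"
proof (cases "bt_tau w < t \<and> t \<le> birth w l + bt_len w l")
  case True
  then obtain x where x: "prefix x l" "alive w t x" using ex_alive_prefix by blast
  have "{x. prefix x l \<and> alive w t x} = {x}"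
    using x alive_prefix_eq[OF assms] prefix_same_cases by blast
  with True show ?thesis by simp
next
  case False
  then have "{x. prefix x l \<and> alive w t x} = {}" using alive_prefix_bounds[OF assms] by blast
  with False show ?thesis by (simp only: card.empty if_False)
qed

lemma extant_eq: "extant w T = {x \<in> bt_gam w. alive w T x}"
  by (auto simp: extant_def alive_def)

lemma Z_eq_card_extant: "Z w T = card (extant w T)"
  by (simp add: Z_def extant_eq)

lemma extant_subtree: "extant (subtree s w x) T = (@) x -` extant w T"
  by (auto simp: extant_eq)

lemma Z_subtree: "Z (subtree s w x) T = card {e \<in> extant w T. prefix x e}"
proof -
  have "{e \<in> extant w T. prefix x e} = (@) x ` ((@) x -` extant w T)"
    by (auto simp: prefix_def)
  then have "card {e \<in> extant w T. prefix x e} = card ((@) x -` extant w T)"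
    by (metis card_image inj_on_def same_append_eq)
  then show ?thesis by (simp add: Z_eq_card_extant extant_subtree)
qed

lemma Z_subtree_pos_iff:
  assumes "finite (extant w T)"
  shows "0 < Z (subtree s w x) T \<longleftrightarrow> (\<exists>e\<in>extant w T. prefix x e)"
  using assms by (auto simp: Z_subtree card_gt_0_iff)

lemma admissible_subtree:
  assumes "admissible T w"
  shows "admissible T (subtree s w x)"
proof -
  have "finite ((@) x -` extant w T)"
    using assms by (intro finite_vimageI) (auto simp: admissible_def inj_def)
  moreover have "prefix_closed {y. x @ y \<in> bt_gam w}"
    using assms by (auto simp: admissible_def prefix_closed_def)
  ultimately show ?thesis
    using assms by (simp add: admissible_def extant_subtree)
qed

lemma lca_eq_Longest_common_prefix:
  assumes "prefix_closed (bt_gam w)" and "extant w T \<noteq> {}"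
  shows "lca T w = Longest_common_prefix (extant w T)"
proof -
  let ?P = "Longest_common_prefix (extant w T)"
  let ?common = "\<lambda>y. \<forall>x\<in>extant w T. prefix y x"
  have common: "?common z \<longleftrightarrow> prefix z ?P" for z
    using assms(2) Longest_common_prefix_max_prefix Longest_common_prefix_prefix prefix_order.trans by metis
  obtain e where e: "e \<in> extant w T" using assms(2) by blast
  then have "prefix ?P e" and "e \<in> bt_gam w"
    by (simp_all add: Longest_common_prefix_prefix extant_def)
  with assms(1) have "?P \<in> bt_gam w" unfolding prefix_closed_def by blast
  have "prefix ?P ?P" by simp
  with common \<open>?P \<in> bt_gam w\<close> show ?thesis
    unfolding lca_def by (intro the_equality) (blast intro: prefix_order.antisym)+
qed

lemma prefix_lca_iff:
  assumes "prefix_closed (bt_gam w)" and "extant w T \<noteq> {}"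
  shows "prefix z (lca T w) \<longleftrightarrow> (\<forall>e\<in>extant w T. prefix z e)"
  using assms(2) Longest_common_prefix_max_prefix Longest_common_prefix_prefix prefix_order.trans
  unfolding lca_eq_Longest_common_prefix[OF assms] by metis

lemma Lranks_eq:
  assumes "admissible T w"
  shows "Lranks s T w = {k. \<exists>e\<in>extant w T. prefix (lca T w @ [k]) e}"
proof -
  have fin: "finite (extant w T)" and closed: "prefix_closed (bt_gam w)"
    using assms by (auto simp: admissible_def)
  have "lca T w @ [k] \<in> bt_gam w" if "e \<in> extant w T" "prefix (lca T w @ [k]) e" for k e
    using closed that unfolding prefix_closed_def extant_def by blast
  then show ?thesis unfolding Lranks_def Z_subtree_pos_iff[OF fin] by blast
qed

lemma finite_Lranks:
  assumes "admissible T w"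
  shows "finite (Lranks s T w)"
proof (rule finite_subset)
  show "Lranks s T w \<subseteq> (\<lambda>e. e ! length (lca T w)) ` extant w T"
  proof
    fix k assume "k \<in> Lranks s T w"
    then obtain e z where "e \<in> extant w T" "e = lca T w @ k # z"
      unfolding Lranks_eq[OF assms] by (auto simp: prefix_def)
    then show "k \<in> (\<lambda>e. e ! length (lca T w)) ` extant w T" by force
  qed
  show "finite ((\<lambda>e. e ! length (lca T w)) ` extant w T)"
    using assms by (simp add: admissible_def)
qed

lemma Lranks_empty_if_lca_extant:
  assumes "admissible T w" and "lca T w \<in> extant w T"
  shows "Lranks s T w = {}"
proof (rule ccontr)
  assume "Lranks s T w \<noteq> {}"
  then obtain k e where e: "e \<in> extant w T" "prefix (lca T w @ [k]) e"
    unfolding Lranks_eq[OF assms(1)] by blast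
  then have "birth w (lca T w) + bt_len w (lca T w) \<le> birth w e"
    using assms(1) by (intro birth_strict_prefix) (auto simp: admissible_def dest: prefix_snocD)
  with e(1) assms(2) show False by (simp add: extant_def)
qed

lemma lca_extant_if_Z_eq_1:
  assumes "admissible T w" and "Z w T = 1"
  shows "lca T w \<in> extant w T"
proof -
  obtain e where e: "extant w T = {e}"
    using assms(2) by (auto simp: Z_eq_card_extant card_1_singleton_iff)
  with assms(1) have "prefix e (lca T w)" and "prefix (lca T w) e"
    using prefix_lca_iff[of w T] by (auto simp: admissible_def)
  with e show ?thesis by (simp add: prefix_order.antisym)
qed

lemma Z_subtree_Lranks_less:
  assumes "admissible T w" and "r \<in> Lranks s T w"
  shows "Z (subtree s w (lca T w @ [r])) T < Z w T"
proof -
  have fin: "finite (extant w T)" and closed: "prefix_closed (bt_gam w)"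
    using assms(1) by (auto simp: admissible_def)
  have ne: "extant w T \<noteq> {}" using assms by (auto simp: Lranks_eq)
  have "\<not> prefix (lca T w @ [r]) (lca T w)" by (simp add: prefix_def)
  then obtain e where "e \<in> extant w T" "\<not> prefix (lca T w @ [r]) e"
    using prefix_lca_iff[OF closed ne] by blast
  then have "{e \<in> extant w T. prefix (lca T w @ [r]) e} \<subset> extant w T" by blast
  with fin show ?thesis unfolding Z_subtree Z_eq_card_extant[of w] by (rule psubset_card_mono)
qed

lemma genealogy_induct [consumes 2, case_names step]:
  assumes "admissible T w" and "0 < Z w T"
    and step: "\<And>w. admissible T w \<Longrightarrow> 0 < Z w T
      \<Longrightarrow> (\<And>r. r \<in> Lranks s T w \<Longrightarrow> P (subtree s w (lca T w @ [r]))) \<Longrightarrow> P w"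
  shows "P w"
  using assms(1,2)
proof (induction "Z w T" arbitrary: w rule: less_induct)
  case less
  show ?case
  proof (rule step[OF less.prems])
    fix r assume r: "r \<in> Lranks s T w"
    show "P (subtree s w (lca T w @ [r]))"
    proof (rule less.hyps)
      show "Z (subtree s w (lca T w @ [r])) T < Z w T"
        using less.prems(1) r by (rule Z_subtree_Lranks_less)
      show "admissible T (subtree s w (lca T w @ [r]))"
        using less.prems(1) by (rule admissible_subtree)
      show "0 < Z (subtree s w (lca T w @ [r])) T"
        using r by (simp add: Lranks_def)
    qed
  qed
qed

lemma NT_eq_0_if_Z_eq_1:
  assumes "admissible T w" and "Z w T = 1"
  shows "NT s T w = 0"
  using Lranks_empty_if_lca_extant[OF assms(1) lca_extant_if_Z_eq_1[OF assms]]
  by (simp add: NT_def)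

lemma kth_child_Lranks:
  assumes "admissible T w" and "k \<in> {1..NT s T w}"
  obtains r where "r \<in> Lranks s T w" and "kth_child s T w k = lca T w @ [r]"
proof -
  have "k - 1 < length (sorted_list_of_set (Lranks s T w))"
    using assms by (auto simp: NT_def)
  then have "sorted_list_of_set (Lranks s T w) ! (k - 1) \<in> Lranks s T w"
    using finite_Lranks[OF assms(1)] by (metis nth_mem set_sorted_list_of_set)
  with that show ?thesis by (simp add: kth_child_def)
qed

abbreviation child_genealogy :: "bool \<Rightarrow> real \<Rightarrow> btree \<Rightarrow> nat \<Rightarrow> btree" where
  "child_genealogy s T w k \<equiv> genealogy s T (subtree s w (kth_child s T w k))"

text \<open>The guard \<open>Z w T \<noteq> 1\<close> in \<^const>\<open>gsub\<close> is redundant, since \<open>Z w T = 1\<close> forces \<open>NT s T w = 0\<close>.\<close>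

lemma gsub_Cons:
  assumes "admissible T w"
  shows "gsub s T w (k # ks) =
    (if k \<in> {1..NT s T w} then gsub s T (subtree s w (kth_child s T w k)) ks else None)"
  using NT_eq_0_if_Z_eq_1[OF assms, of s] by auto

lemma bt_gam_genealogy:
  assumes "admissible T w"
  shows "bt_gam (genealogy s T w) = insert [] (\<Union>k\<in>{1..NT s T w}. (#) k ` bt_gam (child_genealogy s T w k))"
proof (rule set_eqI)
  fix y show "y \<in> bt_gam (genealogy s T w) \<longleftrightarrow>
      y \<in> insert [] (\<Union>k\<in>{1..NT s T w}. (#) k ` bt_gam (child_genealogy s T w k))"
    by (cases y) (auto simp: genealogy_def gsub_Cons[OF assms] image_iff simp del: gsub.simps(2))
qed

lemma bt_len_genealogy_Nil:
  assumes "admissible T w"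
  shows "bt_len (genealogy s T w) [] = LT T w"
  using lca_extant_if_Z_eq_1[OF assms] by (simp add: genealogy_def LT_def)

lemma bt_len_genealogy_Cons:
  assumes "admissible T w" and "k \<in> {1..NT s T w}"
  shows "bt_len (genealogy s T w) (k # ks) = bt_len (child_genealogy s T w k) ks"
  using assms(2) by (simp add: genealogy_def gsub_Cons[OF assms(1)] del: gsub.simps(2))

lemma birth_genealogy_Cons:
  assumes "admissible T w" and "k \<in> {1..NT s T w}"
  shows "birth (genealogy s T w) (k # ks) = birth (child_genealogy s T w k) ks"
proof (induction ks rule: rev_induct)
  case Nil
  obtain r where r: "r \<in> Lranks s T w" and kth: "kth_child s T w k = lca T w @ [r]"
    using assms by (rule kth_child_Lranks)
  then have "lca T w \<notin> extant w T"
    using Lranks_empty_if_lca_extant[OF assms(1)] by blast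
  then have "bt_tau w + LT T w = birth w (kth_child s T w k)"
    by (simp add: LT_def kth birth_snoc)
  then show ?case
    using birth_snoc[of "genealogy s T w" "[]" k] bt_len_genealogy_Nil[OF assms(1)]
    by (simp add: genealogy_def)
next
  case (snoc a ks)
  then show ?case
    using birth_snoc[of "genealogy s T w" "k # ks" a] birth_snoc[of "child_genealogy s T w k" ks a]
      bt_len_genealogy_Cons[OF assms] by simp
qed

lemma alive_genealogy_Cons:
  assumes "admissible T w" and "k \<in> {1..NT s T w}"
  shows "alive (genealogy s T w) t (k # ks) \<longleftrightarrow> alive (child_genealogy s T w k) t ks"
  by (simp add: alive_def birth_genealogy_Cons[OF assms] bt_len_genealogy_Cons[OF assms])

lemma finite_genealogy:
  assumes "admissible T w" and "0 < Z w T"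
  shows "finite (bt_gam (genealogy s T w))"
  using assms
proof (induction w rule: genealogy_induct[where s = s])
  case (step w)
  have "finite (bt_gam (child_genealogy s T w k))" if "k \<in> {1..NT s T w}" for k
    using kth_child_Lranks[OF step.hyps(1) that] step.IH by metis
  then show ?case by (simp add: bt_gam_genealogy[OF step.hyps(1)])
qed

lemma card_Un_UN_append_children:
  fixes c :: "'a list"
  assumes "finite I" and "A \<subseteq> {x. prefix x c}" and "\<And>i. i \<in> I \<Longrightarrow> finite (B i)"
  shows "card (A \<union> (\<Union>i\<in>I. (@) (c @ [i]) ` B i)) = card A + (\<Sum>i\<in>I. card (B i))"
proof -
  have "{x. prefix x c} = set (prefixes c)" by auto
  with assms(2) have "finite A" by (metis finite_set finite_subset)
  moreover have "A \<inter> (\<Union>i\<in>I. (@) (c @ [i]) ` B i) = {}"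
    using assms(2) by (force dest: prefix_length_le)
  moreover have "card ((@) (c @ [i]) ` B i) = card (B i)" for i
    by (rule card_image) (simp add: inj_on_def)
  moreover have "card (\<Union>i\<in>I. (@) (c @ [i]) ` B i) = (\<Sum>i\<in>I. card ((@) (c @ [i]) ` B i))"
    using assms(1,3) by (intro card_UN_disjoint) auto
  ultimately show ?thesis
    using assms(1,3) by (simp add: card_Un_disjoint)
qed

lemma sum_nth_sorted_list_of_set:
  assumes "finite L"
  shows "(\<Sum>k\<in>{1..card L}. f (sorted_list_of_set L ! (k - 1))) = sum f L"
proof -
  have "(\<Sum>k\<in>{1..card L}. f (sorted_list_of_set L ! (k - 1))) = (\<Sum>i<card L. f (sorted_list_of_set L ! i))"
    by (simp add: sum.atLeast1_atMost_eq)
  also have "\<dots> = sum_list (map f (sorted_list_of_set L))"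
    by (simp add: sum_list_sum_nth atLeast0LessThan)
  also have "\<dots> = sum f L"
    using assms by (simp add: sum_list_distinct_conv_sum_set)
  finally show ?thesis .
qed

lemma alive_genealogy_Nil_iff:
  assumes "admissible T w" and "t \<le> T"
  shows "alive (genealogy s T w) t [] \<longleftrightarrow> bt_tau w < t \<and> t \<le> birth w (lca T w) + bt_len w (lca T w)"
proof -
  have "birth (genealogy s T w) [] = bt_tau w" by (simp add: genealogy_def)
  with assms(2) show ?thesis
    by (cases "lca T w \<in> extant w T")
      (auto simp: alive_def bt_len_genealogy_Nil[OF assms(1)] LT_def extant_def)
qed

lemma Z_genealogy_split:
  assumes "admissible T w" and "0 < Z w T"
  shows "Z (genealogy s T w) t = card {y \<in> {[]}. alive (genealogy s T w) t y}
    + (\<Sum>k\<in>{1..NT s T w}. Z (child_genealogy s T w k) t)"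
proof -
  let ?G = "genealogy s T w"
  let ?alive = "\<lambda>k. {y \<in> bt_gam (child_genealogy s T w k). alive (child_genealogy s T w k) t y}"
  have "{y \<in> bt_gam ?G. alive ?G t y} = {y \<in> {[]}. alive ?G t y} \<union> (\<Union>k\<in>{1..NT s T w}. (@) ([] @ [k]) ` ?alive k)"
    by (auto simp: bt_gam_genealogy[OF assms(1)] alive_genealogy_Cons[OF assms(1)])
  moreover have "finite (bt_gam (child_genealogy s T w k))" if k: "k \<in> {1..NT s T w}" for k
  proof -
    obtain r where "r \<in> Lranks s T w" and "kth_child s T w k = lca T w @ [r]"
      using assms(1) k by (rule kth_child_Lranks)
    then show ?thesis
      using assms(1) by (auto intro: finite_genealogy admissible_subtree simp: Lranks_def)
  qed
  ultimately show ?thesis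
    unfolding Z_def by (simp only:) (rule card_Un_UN_append_children; auto)
qed

definition surviving :: "btree \<Rightarrow> real \<Rightarrow> real \<Rightarrow> nat list set" where
  "surviving w T t = {x. alive w t x \<and> (\<exists>e\<in>extant w T. prefix x e)}"

lemma ZT_eq_card_surviving:
  assumes "admissible T w"
  shows "ZT s T w t = card (surviving w T t)"
proof -
  have fin: "finite (extant w T)" and closed: "prefix_closed (bt_gam w)"
    using assms by (auto simp: admissible_def)
  have "x \<in> bt_gam w" if "e \<in> extant w T" "prefix x e" for x e
    using closed that unfolding prefix_closed_def extant_def by blast
  then have "{x \<in> bt_gam w. alive w t x \<and> 0 < Z (subtree s w x) T} = surviving w T t"
    unfolding surviving_def Z_subtree_pos_iff[OF fin] by blast
  then show ?thesis by (simp add: ZT_def)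
qed

lemma finite_surviving:
  assumes "finite (extant w T)"
  shows "finite (surviving w T t)"
proof (rule finite_subset)
  show "surviving w T t \<subseteq> (\<Union>e\<in>extant w T. set (prefixes e))"
    by (auto simp: surviving_def)
qed (use assms in simp)

lemma surviving_subtree: "surviving (subtree s w x) T t = {y. x @ y \<in> surviving w T t}"
  by (fastforce simp: surviving_def extant_subtree prefix_def)

lemma surviving_decomp:
  assumes "admissible T w" and "extant w T \<noteq> {}"
  shows "surviving w T t = {x. prefix x (lca T w) \<and> alive w t x}
    \<union> (\<Union>r\<in>Lranks s T w. (@) (lca T w @ [r]) ` surviving (subtree s w (lca T w @ [r])) T t)"
    (is "_ = ?A \<union> ?B")
proof (intro set_eqI iffI)
  let ?l = "lca T w"
  have lca_common: "\<forall>e\<in>extant w T. prefix ?l e"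
    using assms prefix_lca_iff[of w T ?l] by (simp add: admissible_def)
  fix x
  assume x: "x \<in> surviving w T t"
  then obtain e where e: "e \<in> extant w T" "prefix x e" by (auto simp: surviving_def)
  show "x \<in> ?A \<union> ?B"
  proof (cases "prefix x ?l")
    case True
    with x show ?thesis by (simp add: surviving_def)
  next
    case False
    with e lca_common have "strict_prefix ?l x"
      using prefix_same_cases by (metis prefix_order.order_refl strict_prefix_def)
    then obtain r y where xy: "x = (?l @ [r]) @ y" by (auto elim: strict_prefixE')
    then have "prefix (?l @ [r]) x" by simp
    then have "prefix (?l @ [r]) e" using e(2) by (rule prefix_order.trans)
    with e(1) have "r \<in> Lranks s T w" unfolding Lranks_eq[OF assms(1)] by blast
    moreover have "y \<in> surviving (subtree s w (?l @ [r])) T t"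
      using x xy by (simp add: surviving_subtree)
    ultimately show ?thesis using xy by blast
  qed
next
  let ?l = "lca T w"
  fix x
  assume "x \<in> ?A \<union> ?B"
  then show "x \<in> surviving w T t"
  proof
    assume x: "x \<in> ?A"
    obtain e where "e \<in> extant w T" using assms(2) by blast
    moreover have "prefix ?l e"
      using assms prefix_lca_iff[of w T ?l] calculation by (simp add: admissible_def)
    ultimately show ?thesis
      using x by (auto simp: surviving_def intro: prefix_order.trans)
  qed (auto simp: surviving_subtree)
qed

lemma ZT_split:
  assumes "admissible T w" and "0 < Z w T"
  shows "ZT s T w t = card {x. prefix x (lca T w) \<and> alive w t x}
    + (\<Sum>r\<in>Lranks s T w. ZT s T (subtree s w (lca T w @ [r])) t)"
proof -
  let ?child = "\<lambda>r. subtree s w (lca T w @ [r])"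
  have ne: "extant w T \<noteq> {}" using assms(2) by (auto simp: Z_eq_card_extant)
  have "ZT s T w t = card ({x. prefix x (lca T w) \<and> alive w t x}
      \<union> (\<Union>r\<in>Lranks s T w. (@) (lca T w @ [r]) ` surviving (?child r) T t))"
    by (simp only: ZT_eq_card_surviving[OF assms(1)] surviving_decomp[OF assms(1) ne, where s = s])
  also have "\<dots> = card {x. prefix x (lca T w) \<and> alive w t x}
      + (\<Sum>r\<in>Lranks s T w. card (surviving (?child r) T t))"
    using finite_Lranks[OF assms(1)] admissible_subtree[OF assms(1)]
    by (intro card_Un_UN_append_children) (auto simp: admissible_def intro: finite_surviving)
  also have "\<dots> = card {x. prefix x (lca T w) \<and> alive w t x}
      + (\<Sum>r\<in>Lranks s T w. ZT s T (?child r) t)"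
    using admissible_subtree[OF assms(1)] by (simp add: ZT_eq_card_surviving)
  finally show ?thesis .
qed

lemma Z_genealogy_eq_ZT:
  assumes "admissible T w" and "0 < Z w T" and "t \<le> T"
  shows "Z (genealogy s T w) t = ZT s T w t"
  using assms(1,2)
proof (induction w rule: genealogy_induct[where s = s])
  case (step w)
  let ?l = "lca T w"
  have "{y \<in> {[]}. alive (genealogy s T w) t y} = (if alive (genealogy s T w) t [] then {[]} else {})"
    by auto
  then have "card {y \<in> {[]}. alive (genealogy s T w) t y} = card {x. prefix x ?l \<and> alive w t x}"
    using step.hyps(1) card_alive_prefixes[of w ?l t] alive_genealogy_Nil_iff[OF step.hyps(1) assms(3)]
    by (simp add: admissible_def)
  moreover have "Z (child_genealogy s T w k) t = ZT s T (subtree s w (kth_child s T w k)) t"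
    if "k \<in> {1..NT s T w}" for k
    using kth_child_Lranks[OF step.hyps(1) that] step.IH by metis
  then have "(\<Sum>k\<in>{1..NT s T w}. Z (child_genealogy s T w k) t)
      = (\<Sum>r\<in>Lranks s T w. ZT s T (subtree s w (?l @ [r])) t)"
    using sum_nth_sorted_list_of_set[OF finite_Lranks[OF step.hyps(1)]]
    by (simp add: NT_def kth_child_def)
  ultimately show ?case
    using Z_genealogy_split[OF step.hyps] ZT_split[OF step.hyps] by simp
qed

theorem proposition7:
  fixes symm :: bool and T t :: real and w :: btree
  assumes "is_btree w"
    and "T > 0"
    and "finite (extant w T)"
    and "Z w T > 0"
    and "0 \<le> t" and "t \<le> T"
  shows "Z (genealogy symm T w) t = ZT symm T w t"
  using admissible_if_is_btree[OF assms(1,3)] assms(4,6) by (rule Z_genealogy_eq_ZT)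

end
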